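(* Let $\mathcal D$ be a distribution over $\mathcal X\times\{A,B\}\times\{0,1\}$, $\alpha\in[0,1)$, $\mathcal Q$ any distribution over $\mathcal X\times\{A,B\}\times\{0,1\}$, and $\widetilde{\mathcal D}=(1-\alpha)\mathcal D+\alpha\mathcal Q$. Let $h$ be a fixed hypothesis in a hypothesis class $\mathcal H$ of group-aware hypotheses $\mathcal X\times\{A,B\}\to\{0,1\}$, and fix a group $A$ with $r_A^+:=\Pr_{\mathcal D}[y=1\wedge x\in A]>0$. Then $$\big|\mathrm{TPR}_A(h,\widetilde{\mathcal D})-\mathrm{TPR}_A(h,\mathcal D)\big|\le\frac{\alpha}{(1-\alpha)r_A^++\alpha},$$ where $\mathrm{TPR}_A(h,\mathcal D')=\Pr_{\mathcal D'}[h(x)=1\mid y=1,\ x\in A]$.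
   Context: Examples are triples (features $x$, group in $\{A,B\}$, label $y$); $\widetilde{\mathcal D}$ models malicious noise in which an $\alpha$ fraction of samples comes from an adversarial distribution $\mathcal Q$. *)

theory Defs
  imports "HOL-Probability.Probability"
begin

datatype grp = GA | GB

text \<open>Examples are triples (x, g, y); labels y in {0,1} are encoded as bool (True = 1).\<close>

definition example_space :: "'x measure \<Rightarrow> ('x \<times> grp \<times> bool) measure" where
  "example_space M = M \<Otimes>\<^sub>M (count_space UNIV \<Otimes>\<^sub>M count_space UNIV)"

definition mixture :: "real \<Rightarrow> 'a measure \<Rightarrow> 'a measure \<Rightarrow> 'a measure" where
  "mixture \<alpha> D Q = measure_of (space D) (sets D)
     (\<lambda>S. ennreal (1 - \<alpha>) * emeasure D S + ennreal \<alpha> * emeasure Q S)"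

definition TPR :: "grp \<Rightarrow> ('x \<times> grp \<Rightarrow> bool) \<Rightarrow> ('x \<times> grp \<times> bool) measure \<Rightarrow> real" where
  "TPR g h D' = cond_prob D' (\<lambda>(x, g', y). h (x, g')) (\<lambda>(x, g', y). y \<and> g' = g)"

end

theory Submission
  imports Defs
begin

text \<open>Under the mixture, the numerator and the denominator of the conditional probability are
  the convex combinations (1 - \<alpha>) a + \<alpha> c and (1 - \<alpha>) b + \<alpha> d of the corresponding
  probabilities a, b under D and c, d under Q. The quotient differs from a / b by
  \<alpha> (c b - d a) / (((1 - \<alpha>) b + \<alpha> d) b); since 0 \<le> a \<le> b and 0 \<le> c \<le> d \<le> 1 this is at
  most \<alpha> d / ((1 - \<alpha>) b + \<alpha> d) in absolute value, which increases in d and is therefore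
  at most \<alpha> / ((1 - \<alpha>) b + \<alpha>).\<close>

lemma sets_mixture [simp]: "sets (mixture \<alpha> D Q) = sets D"
  unfolding mixture_def by (simp add: sets.space_closed)

lemma space_mixture [simp]: "space (mixture \<alpha> D Q) = space D"
  unfolding mixture_def by (simp add: sets.space_closed)

lemma emeasure_mixture:
  assumes "sets Q = sets D" and "S \<in> sets D"
  shows "emeasure (mixture \<alpha> D Q) S = ennreal (1 - \<alpha>) * emeasure D S + ennreal \<alpha> * emeasure Q S"
proof -
  let ?\<mu> = "\<lambda>S. ennreal (1 - \<alpha>) * emeasure D S + ennreal \<alpha> * emeasure Q S"
  have "positive (sets D) ?\<mu>"
    by (simp add: positive_def)
  moreover have "countably_additive (sets D) ?\<mu>"
    unfolding countably_additive_def
  proof (intro allI impI)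
    fix A :: "nat \<Rightarrow> _"
    assume A: "range A \<subseteq> sets D" "disjoint_family A" "\<Union> (range A) \<in> sets D"
    have "(\<Sum>i. ?\<mu> (A i)) = (\<Sum>i. ennreal (1 - \<alpha>) * emeasure D (A i)) + (\<Sum>i. ennreal \<alpha> * emeasure Q (A i))"
      by (subst suminf_add) auto
    also have "\<dots> = ennreal (1 - \<alpha>) * (\<Sum>i. emeasure D (A i)) + ennreal \<alpha> * (\<Sum>i. emeasure Q (A i))"
      by simp
    also have "\<dots> = ?\<mu> (\<Union> (range A))"
      using A assms(1) by (simp add: suminf_emeasure)
    finally show "(\<Sum>i. ?\<mu> (A i)) = ?\<mu> (\<Union> (range A))" .
  qed
  ultimately show ?thesis
    unfolding mixture_def using assms(2) by (rule emeasure_measure_of_sigma[OF sets.sigma_algebra_axioms])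
qed

lemma measure_mixture:
  assumes "finite_measure D" "finite_measure Q" "sets Q = sets D" "0 \<le> \<alpha>" "\<alpha> \<le> 1" "S \<in> sets D"
  shows "measure (mixture \<alpha> D Q) S = (1 - \<alpha>) * measure D S + \<alpha> * measure Q S"
proof (rule measure_eq_emeasure_eq_ennreal)
  interpret D: finite_measure D by fact
  interpret Q: finite_measure Q by fact
  show "0 \<le> (1 - \<alpha>) * measure D S + \<alpha> * measure Q S"
    using assms(4,5) by simp
  show "emeasure (mixture \<alpha> D Q) S = ennreal ((1 - \<alpha>) * measure D S + \<alpha> * measure Q S)"
    using assms(4,5) emeasure_mixture[OF assms(3,6)]
    by (simp add: D.emeasure_eq_measure Q.emeasure_eq_measure ennreal_mult' ennreal_plus)
qed

lemma mixture_ratio_deviation: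
  fixes a b c d \<alpha> :: real
  assumes "0 \<le> a" "a \<le> b" "0 < b" "0 \<le> c" "c \<le> d" "d \<le> 1" "0 \<le> \<alpha>" "\<alpha> < 1"
  shows "\<bar>((1 - \<alpha>) * a + \<alpha> * c) / ((1 - \<alpha>) * b + \<alpha> * d) - a / b\<bar> \<le> \<alpha> / ((1 - \<alpha>) * b + \<alpha>)"
proof -
  define e where "e = (1 - \<alpha>) * b + \<alpha> * d"
  have e_pos: "0 < e"
    unfolding e_def using assms by (smt (verit) mult_nonneg_nonneg mult_pos_pos)
  have "((1 - \<alpha>) * a + \<alpha> * c) / e - a / b = \<alpha> * (c * b - d * a) / (e * b)"
    using e_pos assms(3) by (simp add: e_def field_simps)
  then have "\<bar>((1 - \<alpha>) * a + \<alpha> * c) / e - a / b\<bar> = \<alpha> * \<bar>c * b - d * a\<bar> / (e * b)"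
    using e_pos assms(3,7) by (simp add: abs_mult)
  also have "\<dots> \<le> \<alpha> * (d * b) / (e * b)"
  proof -
    have "\<bar>c * b - d * a\<bar> \<le> d * b"
      using assms by (smt (verit) mult_left_mono mult_right_mono mult_nonneg_nonneg)
    then show ?thesis
      using e_pos assms(3,7) by (intro divide_right_mono mult_left_mono) auto
  qed
  also have "\<dots> = \<alpha> * d / e"
    using assms(3) by simp
  also have "\<dots> \<le> \<alpha> / ((1 - \<alpha>) * b + \<alpha>)"
  proof -
    have "0 < (1 - \<alpha>) * b + \<alpha>"
      using assms by (smt (verit) mult_pos_pos)
    moreover have "\<alpha> * d * ((1 - \<alpha>) * b + \<alpha>) \<le> \<alpha> * e"
    proof -
      have "0 \<le> \<alpha> * (1 - \<alpha>) * b * (1 - d)"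
        using assms by simp
      then show ?thesis
        by (simp add: e_def algebra_simps)
    qed
    ultimately show ?thesis
      using e_pos by (simp add: divide_simps)
  qed
  finally show ?thesis
    unfolding e_def .
qed

lemma cond_prob_mixture_deviation:
  assumes "prob_space D" "prob_space Q" "sets Q = sets D" "0 \<le> \<alpha>" "\<alpha> < 1"
    and [measurable]: "Measurable.pred D P" "Measurable.pred D C"
    and "0 < \<P>(\<omega> in D. C \<omega>)"
  shows "\<bar>cond_prob (mixture \<alpha> D Q) P C - cond_prob D P C\<bar> \<le> \<alpha> / ((1 - \<alpha>) * \<P>(\<omega> in D. C \<omega>) + \<alpha>)"
proof -
  interpret D: prob_space D by fact
  interpret Q: prob_space Q by fact
  let ?PC = "{\<omega> \<in> space D. P \<omega> \<and> C \<omega>}" and ?C = "{\<omega> \<in> space D. C \<omega>}"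
  have sets: "?PC \<in> sets D" "?C \<in> sets D" and "?PC \<subseteq> ?C"
    by auto
  have "\<bar>((1 - \<alpha>) * measure D ?PC + \<alpha> * measure Q ?PC) / ((1 - \<alpha>) * measure D ?C + \<alpha> * measure Q ?C)
          - measure D ?PC / measure D ?C\<bar> \<le> \<alpha> / ((1 - \<alpha>) * measure D ?C + \<alpha>)"
    using assms(3-5,8) sets \<open>?PC \<subseteq> ?C\<close>
    by (intro mixture_ratio_deviation) (auto intro!: D.finite_measure_mono Q.finite_measure_mono)
  then show ?thesis
    using assms(4,5) sets
    by (simp add: cond_prob_def measure_mixture[OF D.finite_measure_axioms Q.finite_measure_axioms assms(3)])
qed

theorem mainTheorem6:
  fixes M :: "'x measure"
    and D Q :: "('x \<times> grp \<times> bool) measure"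
    and \<alpha> :: real
    and H :: "('x \<times> grp \<Rightarrow> bool) set"
    and h :: "'x \<times> grp \<Rightarrow> bool"
  assumes "prob_space D" and "sets D = sets (example_space M)"
    and "prob_space Q" and "sets Q = sets (example_space M)"
    and "0 \<le> \<alpha>" and "\<alpha> < 1"
    and "h \<in> H"
    and "h \<in> measurable (M \<Otimes>\<^sub>M count_space UNIV) (count_space UNIV)"
    and "\<P>(\<omega> in D. snd (snd \<omega>) \<and> fst (snd \<omega>) = GA) > 0"
  shows "\<bar>TPR GA h (mixture \<alpha> D Q) - TPR GA h D\<bar>
           \<le> \<alpha> / ((1 - \<alpha>) * \<P>(\<omega> in D. snd (snd \<omega>) \<and> fst (snd \<omega>) = GA) + \<alpha>)"
proof -
  \<comment> \<open>The bound holds for every measurable h.\<close>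
  note [measurable] = assms(8)
  have [measurable_cong]: "sets D = sets (M \<Otimes>\<^sub>M (count_space UNIV \<Otimes>\<^sub>M count_space UNIV))"
    using assms(2) by (simp add: example_space_def)
  have "Measurable.pred D (\<lambda>(x, g', y). h (x, g'))"
    by measurable
  moreover have "Measurable.pred D (\<lambda>(x, g', y). y \<and> g' = GA)"
    by measurable
  ultimately show ?thesis
    using cond_prob_mixture_deviation[of D Q \<alpha>] assms(1-6,9)
    by (simp add: TPR_def case_prod_beta')
qed

end
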